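(* Let $r_1,\dots,r_n$ be establishment records with nonnegative confidential attributes $A_1,\dots,A_m$, let $\psi$ be a neighbor function with distance parameters $\sigma_1,\dots,\sigma_m>0$, and let $\mu_1,\dots,\mu_m>0$. For $j=1,\dots,n$ and $i=1,\dots,m$ define the noisy values $o_{j,i}=\psi(r_j[A_i])+Z_{j,i}$ where the $Z_{j,i}\sim N(0,\sigma_i^2/\mu_i^2)$ are independent. Let $\beta\in(0,1)$, define $\tau=\Phi^{-1}\big((1-\beta)^{1/(mn)}\big)$, and define $u_{j,i}=\psi^{-1}\big(o_{j,i}+\sigma_i\tau/\mu_i\big)$. Then with probability $1-\beta$ the inequalities $r_j[A_i]\leq u_{j,i}$ hold simultaneously for all $j$ and $i$.
   Context: $\Phi$ denotes the standard normal CDF. A neighbor function is a function $\psi:\mathbb{R}_{\geq 0}\to\mathbb{R}$ that is strictly increasing, continuous, concave, and such that $x\mapsto\psi(e^{x})$ is convex; $\psi^{-1}$ denotes its inverse. $r_j[A_i]\geq 0$ denotes the value of confidential attribute $A_i$ in record $r_j$. *)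

theory Defs
  imports "HOL-Probability.Probability"
begin

definition std_normal_cdf :: "real \<Rightarrow> real" where
  "std_normal_cdf x = measure (density lborel std_normal_density) {..x}"

definition std_normal_cdf_inv :: "real \<Rightarrow> real" where
  "std_normal_cdf_inv p = inv std_normal_cdf p"

definition neighbor_function :: "(real \<Rightarrow> real) \<Rightarrow> bool" where
  "neighbor_function \<psi> \<longleftrightarrow>
     strict_mono_on {0..} \<psi> \<and> continuous_on {0..} \<psi> \<and> concave_on {0..} \<psi> \<and>
     convex_on UNIV (\<lambda>x. \<psi> (exp x))"

definition nf_inv :: "(real \<Rightarrow> real) \<Rightarrow> real \<Rightarrow> real" where
  "nf_inv \<psi> y = the_inv_into {0..} \<psi> y"

end

theory Submission
  imports Defs
begin

text \<open>Each noise term satisfies \<open>Z\<^sub>j\<^sub>,\<^sub>i \<ge> -\<sigma>\<^sub>i\<tau>/\<mu>\<^sub>i\<close> with probability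
  \<open>\<Phi>(\<tau>) = (1 - \<beta>)\<^bsup>1/(mn)\<^esup>\<close>, so by independence all \<open>mn\<close> of these events occur
  together with probability \<open>1 - \<beta>\<close>. On that event \<open>o\<^sub>j\<^sub>,\<^sub>i + \<sigma>\<^sub>i\<tau>/\<mu>\<^sub>i \<ge> \<psi>(r\<^sub>j[A\<^sub>i])\<close>,
  and applying the increasing map \<open>\<psi>\<^sup>-\<^sup>1\<close> gives \<open>r\<^sub>j[A\<^sub>i] \<le> u\<^sub>j\<^sub>,\<^sub>i\<close>. That \<open>\<psi>\<^sup>-\<^sup>1\<close> is
  defined on all of \<open>[\<psi>(0), \<infinity>)\<close> comes from the convexity of \<open>\<psi> \<circ> exp\<close>, which makes
  \<open>\<psi>\<close> unbounded.\<close>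

lemma isCont_cdf_density_lborel:
  assumes "real_distribution (density lborel f)" and "f \<in> borel_measurable lborel"
  shows "isCont (cdf (density lborel f)) x"
proof -
  interpret real_distribution "density lborel f" by fact
  have "emeasure (density lborel f) {x} = 0"
    using assms(2) by (simp add: emeasure_density nn_integral_null_set)
  then show ?thesis by (simp add: isCont_cdf measure_def)
qed

lemma (in real_distribution) cdf_attains_value:
  assumes cont: "\<And>x. isCont (cdf M) x" and p: "0 < p" "p < 1"
  shows "\<exists>x. cdf M x = p"
proof -
  have "eventually (\<lambda>x. cdf M x < p) at_bot"
    using cdf_lim_at_bot p(1) by (rule order_tendstoD)
  then obtain a where a: "cdf M a < p" by (auto simp: eventually_at_bot_linorder)
  have "eventually (\<lambda>x. p < cdf M x) at_top"
    using cdf_lim_at_top_prob p(2) by (rule order_tendstoD)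
  then obtain N where N: "\<And>x. N \<le> x \<Longrightarrow> p < cdf M x"
    by (auto simp: eventually_at_top_linorder)
  have "\<exists>x. a \<le> x \<and> x \<le> max a N \<and> cdf M x = p"
    using a N[of "max a N"] cont by (intro IVT') (auto intro: continuous_at_imp_continuous_on)
  then show ?thesis by blast
qed

lemma std_normal_cdf_std_normal_cdf_inv:
  assumes "0 < p" "p < 1"
  shows "std_normal_cdf (std_normal_cdf_inv p) = p"
proof -
  let ?N = "density lborel std_normal_density"
  have N: "real_distribution ?N"
    by (simp add: real_distribution_def real_distribution_axioms_def prob_space_normal_density)
  have \<Phi>: "std_normal_cdf = cdf ?N"
    by (simp add: fun_eq_iff cdf_def std_normal_cdf_def)
  have "p \<in> range std_normal_cdf"
    using real_distribution.cdf_attains_value[OF N isCont_cdf_density_lborel[OF N] assms]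
    by (auto simp: \<Phi>)
  then show ?thesis unfolding std_normal_cdf_inv_def by (rule f_inv_into_f)
qed

text \<open>For \<open>k = 0\<close> the root is \<open>q powr 0 = 1\<close>, whose quantile is a junk value; the power
  is then \<open>1\<close>, which is why the statement is an inequality.\<close>
lemma le_std_normal_cdf_quantile_root_power:
  assumes "0 < q" "q < 1"
  shows "q \<le> std_normal_cdf (std_normal_cdf_inv (q powr (1 / real k))) ^ k"
proof (cases "k = 0")
  case False
  define p where "p = q powr (1 / real k)"
  have "0 < p" "p < 1"
    using assms False powr_less_mono2[of "1 / real k" q 1] by (auto simp: p_def)
  moreover have "p ^ k = q"
    using assms False by (simp add: p_def powr_realpow[symmetric] powr_powr)
  ultimately show ?thesis
    by (simp add: p_def[symmetric] std_normal_cdf_std_normal_cdf_inv)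
qed (use assms in simp)

lemma (in prob_space) prob_normal_ge:
  assumes Z: "distributed M lborel Z (normal_density \<mu> s)" and s: "0 < s"
  shows "prob {\<omega>\<in>space M. \<mu> - s * t \<le> Z \<omega>} = std_normal_cdf t"
proof -
  let ?Y = "\<lambda>\<omega>. (\<mu> - Z \<omega>) / s"
  have "distributed M lborel (\<lambda>\<omega>. \<mu> / s + (-1 / s) * Z \<omega>)
      (normal_density (\<mu> / s + (-1 / s) * \<mu>) (\<bar>-1 / s\<bar> * s))"
    using s by (intro normal_density_affine[OF Z]) auto
  then have Y: "distributed M lborel ?Y std_normal_density"
    using s by (simp add: diff_divide_distrib)
  have "prob (?Y -` {..t} \<inter> space M) = measure (distr M lborel ?Y) {..t}"
    using distributed_measurable[OF Y] by (simp add: measure_distr)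
  also have "\<dots> = std_normal_cdf t"
    unfolding distributed_distr_eq_density[OF Y] std_normal_cdf_def ..
  also have "?Y -` {..t} \<inter> space M = {\<omega>\<in>space M. \<mu> - s * t \<le> Z \<omega>}"
    using s by (auto simp: field_simps)
  finally show ?thesis .
qed

lemma (in prob_space) prob_indep_normal_all_ge:
  assumes indep: "indep_vars (\<lambda>_. borel) Z I" and I: "finite I"
    and distr: "\<And>k. k \<in> I \<Longrightarrow> distributed M lborel (Z k) (normal_density 0 (s k))"
    and s: "\<And>k. k \<in> I \<Longrightarrow> 0 < s k"
  shows "prob {\<omega>\<in>space M. \<forall>k\<in>I. - (s k * t) \<le> Z k \<omega>} = std_normal_cdf t ^ card I"
proof (cases "I = {}")
  case False
  let ?A = "\<lambda>k. {- (s k * t)..}"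
  have "{\<omega>\<in>space M. \<forall>k\<in>I. - (s k * t) \<le> Z k \<omega>} = (\<Inter>k\<in>I. Z k -` ?A k \<inter> space M)"
    using False by auto
  also have "prob \<dots> = (\<Prod>k\<in>I. prob (Z k -` ?A k \<inter> space M))"
    using indep False I by (rule indep_varsD_finite) simp
  also have "\<dots> = (\<Prod>k\<in>I. std_normal_cdf t)"
  proof (rule prod.cong)
    fix k assume "k \<in> I"
    then show "prob (Z k -` ?A k \<inter> space M) = std_normal_cdf t"
      using prob_normal_ge[OF distr s, of k t] by (simp add: vimage_def Int_def conj_commute)
  qed simp
  finally show ?thesis by simp
qed (simp add: prob_space)

lemma neighbor_function_surj:
  assumes nf: "neighbor_function \<psi>" and y: "\<psi> 0 \<le> y"
  shows "\<exists>x\<ge>0. \<psi> x = y"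
proof -
  have sm: "strict_mono_on {0..} \<psi>" and ct: "continuous_on {0..} \<psi>"
    and cv: "convex_on UNIV (\<lambda>x. \<psi> (exp x))"
    using nf by (auto simp: neighbor_function_def)
  define a where "a = \<psi> (exp 0)"
  define b where "b = \<psi> (exp 1)"
  have ab: "a < b" unfolding a_def b_def
    by (rule strict_mono_onD[OF sm]) auto
  text \<open>The chord of the convex map \<open>\<psi> \<circ> exp\<close> through \<open>0\<close> and \<open>1\<close> bounds it from below
    beyond \<open>1\<close>, so \<open>\<psi>\<close> grows at least logarithmically.\<close>
  have chord: "a + t * (b - a) \<le> \<psi> (exp t)" if t: "1 \<le> t" for t :: real
  proof -
    have "\<psi> (exp ((1 - 1/t) *\<^sub>R 0 + (1/t) *\<^sub>R t)) \<le> (1 - 1/t) * \<psi> (exp 0) + (1/t) * \<psi> (exp t)"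
      by (rule convex_onD[OF cv]) (use t in auto)
    also have "(1 - 1/t) *\<^sub>R 0 + (1/t) *\<^sub>R t = (1::real)"
      using t by simp
    finally have "b \<le> (1 - 1/t) * a + (1/t) * \<psi> (exp t)"
      unfolding a_def b_def .
    then show ?thesis
      using t by (simp add: field_simps)
  qed
  define t where "t = max 1 ((y - a) / (b - a))"
  have "(y - a) / (b - a) \<le> t"
    by (simp add: t_def)
  then have "y - a \<le> t * (b - a)"
    using ab by (simp add: pos_divide_le_eq)
  with chord[of t] have "y \<le> \<psi> (exp t)"
    by (simp add: t_def)
  then have "\<exists>x. 0 \<le> x \<and> x \<le> exp t \<and> \<psi> x = y"
    using y ct by (intro IVT') (auto intro: continuous_on_subset)
  then show ?thesis by auto
qed

lemma
  assumes nf: "neighbor_function \<psi>" and y: "\<psi> 0 \<le> y"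
  shows nf_inv_nonneg: "0 \<le> nf_inv \<psi> y"
    and neighbor_function_nf_inv: "\<psi> (nf_inv \<psi> y) = y"
proof -
  obtain x where x: "0 \<le> x" "\<psi> x = y"
    using neighbor_function_surj[OF assms] by blast
  have "inj_on \<psi> {0..}"
    using nf by (auto simp: neighbor_function_def intro: strict_mono_on_imp_inj_on)
  with x have "nf_inv \<psi> y = x"
    unfolding nf_inv_def by (auto intro: the_inv_into_f_eq)
  with x show "0 \<le> nf_inv \<psi> y" "\<psi> (nf_inv \<psi> y) = y" by auto
qed

lemma le_nf_inv_iff:
  assumes nf: "neighbor_function \<psi>" and r: "0 \<le> r" and y: "\<psi> 0 \<le> y"
  shows "r \<le> nf_inv \<psi> y \<longleftrightarrow> \<psi> r \<le> y"
proof -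
  have "strict_mono_on {0..} \<psi>"
    using nf by (simp add: neighbor_function_def)
  then have "r \<le> nf_inv \<psi> y \<longleftrightarrow> \<psi> r \<le> \<psi> (nf_inv \<psi> y)"
    using r nf_inv_nonneg[OF nf y] by (simp add: strict_mono_on_less_eq)
  then show ?thesis
    by (simp add: neighbor_function_nf_inv[OF nf y])
qed

lemma le_nf_inv_add:
  assumes nf: "neighbor_function \<psi>" and r: "0 \<le> r" and z: "0 \<le> z"
  shows "r \<le> nf_inv \<psi> (\<psi> r + z)"
proof -
  have "\<psi> 0 \<le> \<psi> r"
    using nf r by (auto simp: neighbor_function_def intro: strict_mono_on_leD)
  then show ?thesis
    using z by (simp add: le_nf_inv_iff[OF nf r])
qed

lemma borel_measurable_nf_inv:
  assumes nf: "neighbor_function \<psi>"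
  shows "nf_inv \<psi> \<in> borel_measurable borel"
proof -
  have "nf_inv \<psi> y = (THE x. False)" if "y < \<psi> 0" for y
  proof -
    have "\<psi> 0 \<le> \<psi> x" if "0 \<le> x" for x
      using nf that by (auto simp: neighbor_function_def intro: strict_mono_on_leD)
    with \<open>y < \<psi> 0\<close> show ?thesis
      by (force simp: nf_inv_def the_inv_into_def intro: arg_cong[where f = The])
  qed
  then have below: "mono_on {..<\<psi> 0} (nf_inv \<psi>)"
    by (auto intro: mono_onI)
  have above: "mono_on {\<psi> 0..} (nf_inv \<psi>)"
  proof (rule mono_onI)
    fix y y' assume "y \<in> {\<psi> 0..}" "y' \<in> {\<psi> 0..}" "y \<le> y'"
    then show "nf_inv \<psi> y \<le> nf_inv \<psi> y'"
      using le_nf_inv_iff[OF nf nf_inv_nonneg[OF nf]] neighbor_function_nf_inv[OF nf] by simp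
  qed
  show ?thesis
    by (rule borel_measurable_piecewise_mono[of "{{..<\<psi> 0}, {\<psi> 0..}}"])
      (use below above in auto)
qed

lemma (in prob_space) prob_all_ge_le_prob_all_le_nf_inv_add:
  assumes nf: "neighbor_function \<psi>" and I: "finite I"
    and r: "\<And>k. k \<in> I \<Longrightarrow> 0 \<le> r k"
    and Z: "\<And>k. k \<in> I \<Longrightarrow> Z k \<in> borel_measurable M"
  shows "prob {\<omega>\<in>space M. \<forall>k\<in>I. - c k \<le> Z k \<omega>}
    \<le> prob {\<omega>\<in>space M. \<forall>k\<in>I. r k \<le> nf_inv \<psi> (\<psi> (r k) + Z k \<omega> + c k)}"
proof (rule finite_measure_mono)
  have "r k \<le> nf_inv \<psi> (\<psi> (r k) + (Z k \<omega> + c k))" if "k \<in> I" "- c k \<le> Z k \<omega>" for k \<omega>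
    using that by (intro le_nf_inv_add[OF nf r]) auto
  then show "{\<omega>\<in>space M. \<forall>k\<in>I. - c k \<le> Z k \<omega>}
    \<subseteq> {\<omega>\<in>space M. \<forall>k\<in>I. r k \<le> nf_inv \<psi> (\<psi> (r k) + Z k \<omega> + c k)}"
    by (auto simp: add.assoc)
  have [measurable]: "nf_inv \<psi> \<in> borel_measurable borel"
    using nf by (rule borel_measurable_nf_inv)
  show "{\<omega>\<in>space M. \<forall>k\<in>I. r k \<le> nf_inv \<psi> (\<psi> (r k) + Z k \<omega> + c k)} \<in> events"
    using I Z by (intro sets.sets_Collect_finite_All) auto
qed

theorem theorem6p7:
  fixes M :: "'a measure"
    and n m :: nat
    and r :: "nat \<Rightarrow> nat \<Rightarrow> real"
    and \<psi> :: "real \<Rightarrow> real"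
    and \<sigma> \<mu> :: "nat \<Rightarrow> real"
    and Z :: "nat \<Rightarrow> nat \<Rightarrow> 'a \<Rightarrow> real"
    and \<beta> :: real
  assumes "prob_space M"
    and r_nonneg: "\<And>j i. j \<in> {1..n} \<Longrightarrow> i \<in> {1..m} \<Longrightarrow> 0 \<le> r j i"
    and "neighbor_function \<psi>"
    and \<sigma>_pos: "\<And>i. i \<in> {1..m} \<Longrightarrow> 0 < \<sigma> i"
    and \<mu>_pos: "\<And>i. i \<in> {1..m} \<Longrightarrow> 0 < \<mu> i"
    and Z_distr: "\<And>j i. j \<in> {1..n} \<Longrightarrow> i \<in> {1..m} \<Longrightarrow>
         distributed M lborel (Z j i) (normal_density 0 (\<sigma> i / \<mu> i))"
    and Z_indep: "prob_space.indep_vars M (\<lambda>_. borel) (\<lambda>(j, i). Z j i) ({1..n} \<times> {1..m})"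
    and "0 < \<beta>" and "\<beta> < 1"
  shows "let \<tau> = std_normal_cdf_inv ((1 - \<beta>) powr (1 / real (m * n)));
             ob = (\<lambda>j i \<omega>. \<psi> (r j i) + Z j i \<omega>);
             u = (\<lambda>j i \<omega>. nf_inv \<psi> (ob j i \<omega> + \<sigma> i * \<tau> / \<mu> i))
         in measure M {\<omega> \<in> space M. \<forall>j\<in>{1..n}. \<forall>i\<in>{1..m}. r j i \<le> u j i \<omega>} \<ge> 1 - \<beta>"
proof -
  interpret prob_space M by fact
  define \<tau> where "\<tau> = std_normal_cdf_inv ((1 - \<beta>) powr (1 / real (m * n)))"
  let ?I = "{1..n} \<times> {1..m}"
  let ?r = "\<lambda>(j, i). r j i" and ?Z = "\<lambda>(j, i). Z j i" and ?s = "\<lambda>(j, i). \<sigma> i / \<mu> i"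
  have "1 - \<beta> \<le> std_normal_cdf \<tau> ^ (m * n)"
    unfolding \<tau>_def using \<open>0 < \<beta>\<close> \<open>\<beta> < 1\<close> by (intro le_std_normal_cdf_quantile_root_power) auto
  also have "\<dots> = std_normal_cdf \<tau> ^ card ?I"
    by (simp add: card_cartesian_product mult.commute)
  also have "\<dots> = prob {\<omega>\<in>space M. \<forall>k\<in>?I. - (?s k * \<tau>) \<le> ?Z k \<omega>}"
    using Z_distr \<sigma>_pos \<mu>_pos by (intro prob_indep_normal_all_ge[OF Z_indep, symmetric]) auto
  also have "\<dots> \<le> prob {\<omega>\<in>space M. \<forall>k\<in>?I. ?r k \<le> nf_inv \<psi> (\<psi> (?r k) + ?Z k \<omega> + ?s k * \<tau>)}"
    using r_nonneg distributed_measurable[OF Z_distr]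
    by (intro prob_all_ge_le_prob_all_le_nf_inv_add \<open>neighbor_function \<psi>\<close>) auto
  finally show ?thesis
    unfolding Let_def \<tau>_def by simp
qed

end
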